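(* Let $\mathbb X,\mathbb Y$ be Euclidean spaces, $\Phi\colon\mathbb X\rightrightarrows\mathbb Y$ a set-valued mapping whose graph is closed locally around $(\bar x,\bar y)\in\operatorname{gph}\Phi$, $u\in\mathbb S_{\mathbb X}$, and $\gamma\ge1$. If $\ker D^*_\gamma\Phi((\bar x,\bar y);(u,0))\subset\{0\}$, then $\Phi$ is metrically pseudo-subregular of order $\gamma$ at $(\bar x,\bar y)$ in direction $u$.
   Context: Pseudo-coderivative of order $\gamma$: $x^*\in D^*_\gamma\Phi((\bar x,\bar y);(u,v))(y^* )$ iff there are $u_k\to u$, $v_k\to v$, $t_k\downarrow0$, $x_k^*\to x^*$, $y_k^*\to y^*$ with $(x_k^*,-y_k^*/(t_k\|u_k\|)^{\gamma-1})\in\widehat{\mathcal N}_{\operatorname{gph}\Phi}(\bar x+t_ku_k,\bar y+(t_k\|u_k\|)^\gamma v_k)$ for all $k$ ($\widehat{\mathcal N}$ the regular normal cone); $\ker\Psi=\{y^*\mid 0\in\Psi(y^* )\}$. Metric pseudo-subregularity of order $\gamma$ in direction $u$: there are $\varepsilon,\delta,\kappa>0$ with $\|x-\bar x\|^{\gamma-1}\operatorname{dist}(x,\Phi^{-1}(\bar y))\le\kappa\operatorname{dist}(\bar y,\Phi(x))$ for all $x\in\bar x+\mathbb B_{\varepsilon,\delta}(u)$, where $\mathbb B_{\varepsilon,\delta}(u)=\{w\mid\|\|w\|u-\|u\|w\|\le\delta\|u\|\|w\|,\ \|w\|\le\varepsilon\}$. *)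

theory Defs
  imports "HOL-Analysis.Analysis"
begin

definition gph :: "('a \<Rightarrow> 'b set) \<Rightarrow> ('a \<times> 'b) set" where
  "gph Phi = {(x, y). y \<in> Phi x}"

definition inv_img :: "('a \<Rightarrow> 'b set) \<Rightarrow> 'b \<Rightarrow> 'a set" where
  "inv_img Phi y = {x. y \<in> Phi x}"

definition regular_normal_cone :: "'a::real_inner set \<Rightarrow> 'a \<Rightarrow> 'a set" where
  "regular_normal_cone \<Omega> z =
     {zs. z \<in> \<Omega> \<and> (\<forall>\<epsilon>>0. \<exists>\<delta>>0. \<forall>z'\<in>\<Omega>. norm (z' - z) < \<delta> \<longrightarrow>
              inner zs (z' - z) \<le> \<epsilon> * norm (z' - z))}"

definition pseudo_coderivative ::
  "real \<Rightarrow> ('a::euclidean_space \<Rightarrow> 'b::euclidean_space set) \<Rightarrow> 'a \<Rightarrow> 'b \<Rightarrow> 'a \<Rightarrow> 'b \<Rightarrow> 'b \<Rightarrow> 'a set" where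
  "pseudo_coderivative \<gamma> Phi xb yb u v ys =
     {xs. \<exists>(uk::nat \<Rightarrow> 'a) (vk::nat \<Rightarrow> 'b) (tk::nat \<Rightarrow> real) (xsk::nat \<Rightarrow> 'a) (ysk::nat \<Rightarrow> 'b).
        uk \<longlonglongrightarrow> u \<and> vk \<longlonglongrightarrow> v \<and> (\<forall>k. tk k > 0) \<and> tk \<longlonglongrightarrow> 0 \<and>
        xsk \<longlonglongrightarrow> xs \<and> ysk \<longlonglongrightarrow> ys \<and>
        (\<forall>k. (xsk k, - ((1 / (tk k * norm (uk k)) powr (\<gamma> - 1)) *\<^sub>R ysk k))
              \<in> regular_normal_cone (gph Phi)
                   (xb + tk k *\<^sub>R uk k, yb + ((tk k * norm (uk k)) powr \<gamma>) *\<^sub>R vk k))}"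

definition ker_sv :: "('b \<Rightarrow> 'a::zero set) \<Rightarrow> 'b set" where
  "ker_sv Psi = {ys. 0 \<in> Psi ys}"

definition dir_nbhd :: "real \<Rightarrow> real \<Rightarrow> 'a::real_normed_vector \<Rightarrow> 'a set" where
  "dir_nbhd \<epsilon> \<delta> u =
     {w. norm (norm w *\<^sub>R u - norm u *\<^sub>R w) \<le> \<delta> * norm u * norm w \<and> norm w \<le> \<epsilon>}"

(* Metric pseudo-subregularity of order gamma at (xb,yb) in direction u.
   dist(yb, Phi x) = +infinity when Phi x = {}, so the inequality is only
   required when Phi x is nonempty (infdist to {} is 0 in Isabelle). *)
definition metrically_pseudo_subregular ::
  "real \<Rightarrow> ('a::euclidean_space \<Rightarrow> 'b::euclidean_space set) \<Rightarrow> 'a \<Rightarrow> 'b \<Rightarrow> 'a \<Rightarrow> bool" where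
  "metrically_pseudo_subregular \<gamma> Phi xb yb u \<longleftrightarrow>
     (\<exists>\<epsilon>>0. \<exists>\<delta>>0. \<exists>\<kappa>>0. \<forall>x \<in> (\<lambda>w. xb + w) ` dir_nbhd \<epsilon> \<delta> u.
        Phi x \<noteq> {} \<longrightarrow>
        norm (x - xb) powr (\<gamma> - 1) * infdist x (inv_img Phi yb) \<le> \<kappa> * infdist yb (Phi x))"

end

(*
  If subregularity fails, then for every \<kappa> there are points
  x = xb + w, with w small and pointing almost in direction u, and y \<in> Phi x such that
  \<kappa> |y - yb| < |w|^(\<gamma>-1) dist(x, Phi^-1(yb)). Minimising |y' - yb| + \<beta> |x' - x|^2 over
  the (locally compact) graph near (x, y) gives a graph point (x', y') with y' \<noteq> yb, within
  |w|/sqrt \<kappa> of x, at which the Fermat rule produces the regular normal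
  (-2\<beta>(x' - x), -(y' - yb)/|y' - yb|). Divided by |x' - xb|^(\<gamma>-1) it has exactly the shape
  required by the pseudo-coderivative in direction (u, 0), with an x*-part of order
  1/sqrt \<kappa> and a unit y*-part; letting \<kappa> \<rightarrow> \<infinity> and passing to a convergent subsequence of
  the y*-parts yields a unit vector in the kernel.
*)

theory Submission
  imports Defs
begin

lemma regular_normal_cone_scaleR:
  assumes "n \<in> regular_normal_cone \<Omega> z" "c > 0"
  shows "c *\<^sub>R n \<in> regular_normal_cone \<Omega> z"
  unfolding regular_normal_cone_def
proof safe
  show "z \<in> \<Omega>" using assms(1) unfolding regular_normal_cone_def by blast
  fix \<epsilon> :: real assume "\<epsilon> > 0"
  then have "\<epsilon> / c > 0" using assms(2) by simp
  then obtain \<delta> where "\<delta> > 0"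
    and \<delta>: "\<forall>z'\<in>\<Omega>. norm (z' - z) < \<delta> \<longrightarrow> inner n (z' - z) \<le> (\<epsilon> / c) * norm (z' - z)"
    using assms(1) unfolding regular_normal_cone_def by blast
  have "inner (c *\<^sub>R n) (z' - z) \<le> \<epsilon> * norm (z' - z)"
    if "z' \<in> \<Omega>" "norm (z' - z) < \<delta>" for z'
    using \<delta> that assms(2) by (simp add: pos_le_divide_eq mult.commute)
  with \<open>\<delta> > 0\<close> show "\<exists>\<delta>>0. \<forall>z'\<in>\<Omega>. norm (z' - z) < \<delta> \<longrightarrow>
      inner (c *\<^sub>R n) (z' - z) \<le> \<epsilon> * norm (z' - z)"
    by blast
qed

lemma regular_normal_cone_local_min:
  fixes g :: "'a::real_inner \<Rightarrow> real"
  assumes "(g has_derivative (\<lambda>h. inner n h)) (at z)" "z \<in> \<Omega>" "open U" "z \<in> U"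
    and min: "\<And>z'. z' \<in> \<Omega> \<inter> U \<Longrightarrow> g z \<le> g z'"
  shows "- n \<in> regular_normal_cone \<Omega> z"
  unfolding regular_normal_cone_def
proof safe
  show "z \<in> \<Omega>" by fact
  fix \<epsilon> :: real assume "\<epsilon> > 0"
  then obtain d1 where "d1 > 0"
    and d1: "\<And>z'. norm (z' - z) < d1 \<Longrightarrow> norm (g z' - g z - inner n (z' - z)) \<le> \<epsilon> * norm (z' - z)"
    using assms(1) unfolding has_derivative_at_alt by blast
  obtain d2 where "d2 > 0" "ball z d2 \<subseteq> U" using assms(3,4) open_contains_ball by blast
  have "inner (- n) (z' - z) \<le> \<epsilon> * norm (z' - z)"
    if "z' \<in> \<Omega>" "norm (z' - z) < min d1 d2" for z'
  proof -
    have "z' \<in> U" using that \<open>ball z d2 \<subseteq> U\<close> by (auto simp: dist_norm norm_minus_commute)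
    then have "g z \<le> g z'" using min that by blast
    with d1[of z'] that show ?thesis by auto
  qed
  moreover have "min d1 d2 > 0" using \<open>d1 > 0\<close> \<open>d2 > 0\<close> by simp
  ultimately show "\<exists>\<delta>>0. \<forall>z'\<in>\<Omega>. norm (z' - z) < \<delta> \<longrightarrow> inner (- n) (z' - z) \<le> \<epsilon> * norm (z' - z)"
    by blast
qed

lemma has_derivative_norm_plus_square:
  fixes x x' :: "'a::real_inner" and y' yb :: "'b::real_inner"
  assumes "y' \<noteq> yb"
  shows "((\<lambda>p. norm (snd p - yb) + \<beta> * (norm (fst p - x))\<^sup>2) has_derivative
          (\<lambda>h. inner ((2 * \<beta>) *\<^sub>R (x' - x), sgn (y' - yb)) h)) (at (x', y'))"
proof -
  have "((\<lambda>p. snd p - yb) has_derivative snd) (at (x', y'))"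
    by (auto intro!: derivative_eq_intros)
  from has_derivative_compose[OF this has_derivative_norm] assms
  have "((\<lambda>p. norm (snd p - yb)) has_derivative (\<lambda>h. inner (sgn (y' - yb)) (snd h))) (at (x', y'))"
    by (simp add: inner_commute)
  moreover have "((\<lambda>p. \<beta> * (norm (fst p - x))\<^sup>2) has_derivative
      (\<lambda>h. inner ((2 * \<beta>) *\<^sub>R (x' - x)) (fst h))) (at (x', y'))"
    unfolding power2_norm_eq_inner
    by (rule derivative_eq_intros refl | simp add: inner_commute algebra_simps)+
  ultimately show ?thesis
    by (rule has_derivative_add[THEN has_derivative_eq_rhs])
      (auto simp: add.commute)
qed

lemma infdist_lessE:
  assumes "A \<noteq> {}" "infdist x A < e"
  obtains a where "a \<in> A" "dist x a < e"
proof -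
  have "bdd_below ((\<lambda>a. dist x a) ` A)" by (rule bdd_belowI[of _ 0]) auto
  then show ?thesis using assms that infdist_notempty[OF assms(1), of x] cINF_less_iff by metis
qed

lemma penalized_minimizer_regular_normal:
  fixes Phi :: "'a::euclidean_space \<Rightarrow> 'b::euclidean_space set" and x :: 'a and yb :: 'b
  defines "\<rho> \<equiv> infdist x (inv_img Phi yb)"
  assumes closed: "closed (gph Phi \<inter> cball (xb, yb) r)"
    and y: "y \<in> Phi x"
    and \<beta>: "norm (y - yb) < \<beta> * \<rho>\<^sup>2"
    and room: "norm (x - xb) + \<rho> + 2 * norm (y - yb) \<le> r"
  obtains x' y' where "y' \<noteq> yb"
    "norm (y' - yb) + \<beta> * (norm (x' - x))\<^sup>2 \<le> norm (y - yb)"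
    "- ((2 * \<beta>) *\<^sub>R (x' - x), sgn (y' - yb)) \<in> regular_normal_cone (gph Phi) (x', y')"
proof -
  define e where "e = norm (y - yb)"
  define g where "g = (\<lambda>p::'a \<times> 'b. norm (snd p - yb) + \<beta> * (norm (fst p - x))\<^sup>2)"
  define S where "S = gph Phi \<inter> (cball x \<rho> \<times> cball yb (2 * e))"
  have "0 < \<beta> * \<rho>\<^sup>2" using \<beta> norm_ge_zero[of "y - yb"] by linarith
  then have "\<beta> > 0" "\<rho> \<noteq> 0" by (auto simp: zero_less_mult_iff)
  then have "\<rho> > 0" using infdist_nonneg[of x "inv_img Phi yb"] unfolding \<rho>_def by linarith
  have "y \<noteq> yb"
    using \<open>\<rho> > 0\<close> y unfolding \<rho>_def inv_img_def by auto
  then have "e > 0" unfolding e_def by simp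
  have "cball x \<rho> \<times> cball yb (2 * e) \<subseteq> cball (xb, yb) r"
  proof clarsimp
    fix a b assume "dist x a \<le> \<rho>" "dist yb b \<le> 2 * e"
    moreover have "dist (xb, yb) (a, b) \<le> norm (a - x) + norm (x - xb) + norm (b - yb)"
      using norm_Pair_le[of "a - xb" "b - yb"] norm_triangle_ineq[of "a - x" "x - xb"]
      by (simp add: dist_norm norm_Pair norm_minus_commute)
    ultimately show "dist (xb, yb) (a, b) \<le> r"
      using room by (simp add: e_def dist_norm norm_minus_commute)
  qed
  then have "S = (gph Phi \<inter> cball (xb, yb) r) \<inter> (cball x \<rho> \<times> cball yb (2 * e))"
    unfolding S_def by blast
  then have "compact S"
    using closed by (simp add: closed_Int_compact compact_Times)
  moreover have "(x, y) \<in> S"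
    using y \<open>\<rho> > 0\<close> \<open>e > 0\<close> by (simp add: S_def gph_def e_def dist_norm norm_minus_commute)
  moreover have "continuous_on S g" unfolding g_def by (intro continuous_intros)
  ultimately obtain x' y' where "(x', y') \<in> S" and min: "\<And>q. q \<in> S \<Longrightarrow> g (x', y') \<le> g q"
    using continuous_attains_inf[of S g] by fastforce
  then have graph: "y' \<in> Phi x'" by (simp add: S_def gph_def)
  have g_le: "norm (y' - yb) + \<beta> * (norm (x' - x))\<^sup>2 \<le> e"
    using min[OF \<open>(x, y) \<in> S\<close>] by (simp add: g_def e_def)
  moreover have "0 \<le> \<beta> * (norm (x' - x))\<^sup>2" using \<open>\<beta> > 0\<close> by simp
  ultimately have "norm (y' - yb) < 2 * e" "\<beta> * (norm (x' - x))\<^sup>2 < \<beta> * \<rho>\<^sup>2"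
    using \<open>e > 0\<close> \<beta> norm_ge_zero[of "y' - yb"] unfolding e_def by linarith+
  then have "norm (x' - x) < \<rho>"
    using \<open>\<beta> > 0\<close> \<open>\<rho> > 0\<close> by (simp add: power_less_imp_less_base)
  have "y' \<noteq> yb"
  proof
    assume "y' = yb"
    then have "\<rho> \<le> dist x x'"
      using graph unfolding \<rho>_def by (intro infdist_le) (simp add: inv_img_def)
    with \<open>norm (x' - x) < \<rho>\<close> show False by (simp add: dist_norm norm_minus_commute)
  qed
  have "(x', y') \<in> ball x \<rho> \<times> ball yb (2 * e)"
    using \<open>norm (x' - x) < \<rho>\<close> \<open>norm (y' - yb) < 2 * e\<close> by (simp add: dist_norm norm_minus_commute)
  moreover have "g (x', y') \<le> g q" if "q \<in> gph Phi \<inter> (ball x \<rho> \<times> ball yb (2 * e))" for q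
    using min that unfolding S_def by (auto simp: mem_Times_iff)
  ultimately have "- ((2 * \<beta>) *\<^sub>R (x' - x), sgn (y' - yb)) \<in> regular_normal_cone (gph Phi) (x', y')"
    using graph \<open>y' \<noteq> yb\<close> unfolding g_def
    by (intro regular_normal_cone_local_min[OF has_derivative_norm_plus_square,
          where U = "ball x \<rho> \<times> ball yb (2 * e)"])
      (auto simp: gph_def open_Times)
  with \<open>y' \<noteq> yb\<close> g_le that show ?thesis by (simp add: e_def)
qed

lemma penalty_radius_bounds:
  fixes \<kappa> \<rho> e d :: real
  assumes "\<kappa> > 0" "\<rho> > 0" "e > 0" "d \<ge> 0" and le: "(\<kappa> * e / \<rho>\<^sup>2) * d\<^sup>2 \<le> e"
  shows "d \<le> \<rho> / sqrt \<kappa>" "(\<kappa> * e / \<rho>\<^sup>2) * d \<le> (\<kappa> * e / \<rho>) / sqrt \<kappa>"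
proof -
  have "e * (\<kappa> * d\<^sup>2) \<le> e * \<rho>\<^sup>2" using le \<open>\<rho> > 0\<close> by (simp add: field_simps)
  then have "\<kappa> * d\<^sup>2 \<le> \<rho>\<^sup>2" using \<open>e > 0\<close> by simp
  then have "d\<^sup>2 \<le> (\<rho> / sqrt \<kappa>)\<^sup>2" using \<open>\<kappa> > 0\<close> by (simp add: field_simps)
  moreover have "0 \<le> \<rho> / sqrt \<kappa>" using \<open>\<rho> > 0\<close> \<open>\<kappa> > 0\<close> by simp
  ultimately show d: "d \<le> \<rho> / sqrt \<kappa>" by (rule power2_le_imp_le)
  have "(\<kappa> * e / \<rho>\<^sup>2) * d \<le> (\<kappa> * e / \<rho>\<^sup>2) * (\<rho> / sqrt \<kappa>)"
    using d assms(1-3) by (intro mult_left_mono) simp_all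
  also have "\<dots> = (\<kappa> * e / \<rho>) / sqrt \<kappa>" using \<open>\<rho> > 0\<close> by (simp add: power2_eq_square)
  finally show "(\<kappa> * e / \<rho>\<^sup>2) * d \<le> (\<kappa> * e / \<rho>) / sqrt \<kappa>" .
qed

lemma subregularity_failure_witness:
  fixes Phi :: "'a::euclidean_space \<Rightarrow> 'b::euclidean_space set" and x xb :: 'a and yb :: 'b
  defines "\<tau> \<equiv> norm (x - xb)" and "\<rho> \<equiv> infdist x (inv_img Phi yb)"
  assumes base: "(xb, yb) \<in> gph Phi" and "\<kappa> > 0" "Phi x \<noteq> {}"
    and fail: "\<kappa> * infdist yb (Phi x) < \<tau> powr (\<gamma> - 1) * \<rho>"
  obtains y where "y \<in> Phi x" "y \<noteq> yb" "\<tau> > 0" "\<rho> > 0" "\<rho> \<le> \<tau>"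
    "\<kappa> * norm (y - yb) < \<tau> powr (\<gamma> - 1) * \<rho>"
proof -
  have "0 \<le> \<kappa> * infdist yb (Phi x)" using \<open>\<kappa> > 0\<close> infdist_nonneg[of yb] by simp
  then have "0 < \<tau> powr (\<gamma> - 1) * \<rho>" using fail by linarith
  moreover have "\<rho> \<ge> 0" unfolding \<rho>_def by (rule infdist_nonneg)
  ultimately have "\<tau> powr (\<gamma> - 1) > 0" "\<rho> > 0" by (simp_all add: zero_less_mult_iff)
  then have "\<tau> > 0" unfolding \<tau>_def by (metis norm_ge_zero order_less_le powr_0)
  have "xb \<in> inv_img Phi yb" using base by (simp add: inv_img_def gph_def)
  then have "\<rho> \<le> \<tau>" unfolding \<rho>_def \<tau>_def by (metis infdist_le dist_norm)
  have "infdist yb (Phi x) < \<tau> powr (\<gamma> - 1) * \<rho> / \<kappa>"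
    using fail \<open>\<kappa> > 0\<close> by (simp add: field_simps)
  then obtain y where "y \<in> Phi x" "dist yb y < \<tau> powr (\<gamma> - 1) * \<rho> / \<kappa>"
    using infdist_lessE[OF \<open>Phi x \<noteq> {}\<close>] by blast
  moreover from this have "y \<noteq> yb"
    using \<open>\<rho> > 0\<close> unfolding \<rho>_def inv_img_def by auto
  ultimately show ?thesis
    using that \<open>\<tau> > 0\<close> \<open>\<rho> > 0\<close> \<open>\<rho> \<le> \<tau>\<close> \<open>\<kappa> > 0\<close>
    by (simp add: dist_norm norm_minus_commute field_simps)
qed

lemma subregularity_failure_penalized_point:
  fixes Phi :: "'a::euclidean_space \<Rightarrow> 'b::euclidean_space set" and x xb :: 'a and yb :: 'b
  defines "\<tau> \<equiv> norm (x - xb)"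
  assumes closed: "closed (gph Phi \<inter> cball (xb, yb) r)"
    and base: "(xb, yb) \<in> gph Phi" and "\<gamma> \<ge> 1" "\<kappa> \<ge> 4" "\<tau> \<le> 1" "3 * \<tau> \<le> r"
    and "Phi x \<noteq> {}"
    and fail: "\<kappa> * infdist yb (Phi x) < \<tau> powr (\<gamma> - 1) * infdist x (inv_img Phi yb)"
  obtains x' y' \<beta> where "\<tau> > 0" "\<beta> > 0" "y' \<noteq> yb"
    "- ((2 * \<beta>) *\<^sub>R (x' - x), sgn (y' - yb)) \<in> regular_normal_cone (gph Phi) (x', y')"
    "norm (x' - x) \<le> \<tau> / sqrt \<kappa>"
    "\<beta> * norm (x' - x) \<le> \<tau> powr (\<gamma> - 1) / sqrt \<kappa>"
    "\<kappa> * norm (y' - yb) \<le> \<tau> powr \<gamma>"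
proof -
  define \<rho> where "\<rho> = infdist x (inv_img Phi yb)"
  define P where "P = \<tau> powr (\<gamma> - 1)"
  have "\<kappa> > 0" using \<open>\<kappa> \<ge> 4\<close> by simp
  then obtain y where y: "y \<in> Phi x" "y \<noteq> yb" and "\<tau> > 0" "\<rho> > 0" "\<rho> \<le> \<tau>"
    and ke: "\<kappa> * norm (y - yb) < P * \<rho>"
    using subregularity_failure_witness[OF base _ \<open>Phi x \<noteq> {}\<close> fail[unfolded \<tau>_def]]
    unfolding \<tau>_def \<rho>_def P_def by blast
  define e where "e = norm (y - yb)"
  \<comment> \<open>The weight that confines the penalised minimiser to the ball of radius \<rho> / sqrt \<kappa> around x.\<close>
  define \<beta> where "\<beta> = \<kappa> * e / \<rho>\<^sup>2"
  have "e > 0" using y(2) unfolding e_def by simp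
  then have "\<beta> > 0" "norm (y - yb) < \<beta> * \<rho>\<^sup>2"
    unfolding \<beta>_def using \<open>\<kappa> \<ge> 4\<close> \<open>\<rho> > 0\<close> by (simp_all add: e_def)
  moreover have "\<tau> + \<rho> + 2 * e \<le> r"
  proof -
    have "P \<le> 1" unfolding P_def using \<open>\<gamma> \<ge> 1\<close> \<open>\<tau> \<le> 1\<close> \<open>\<tau> > 0\<close> by (intro powr_le1) auto
    then have "4 * e \<le> \<kappa> * e" "P * \<rho> \<le> \<rho>"
      using \<open>\<kappa> \<ge> 4\<close> \<open>e > 0\<close> \<open>\<rho> > 0\<close> by simp_all
    then show ?thesis using ke \<open>\<rho> \<le> \<tau>\<close> \<open>\<tau> > 0\<close> \<open>3 * \<tau> \<le> r\<close> unfolding e_def by linarith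
  qed
  ultimately obtain x' y' where "y' \<noteq> yb"
      and min: "norm (y' - yb) + \<beta> * (norm (x' - x))\<^sup>2 \<le> e"
      and normal: "- ((2 * \<beta>) *\<^sub>R (x' - x), sgn (y' - yb)) \<in> regular_normal_cone (gph Phi) (x', y')"
    using penalized_minimizer_regular_normal[OF closed y(1)]
    unfolding \<rho>_def \<tau>_def e_def by blast
  have "0 \<le> \<beta> * (norm (x' - x))\<^sup>2" using \<open>\<beta> > 0\<close> by simp
  then have "norm (y' - yb) \<le> e" "\<beta> * (norm (x' - x))\<^sup>2 \<le> e"
    using min norm_ge_zero[of "y' - yb"] by linarith+
  note radius = penalty_radius_bounds[OF \<open>\<kappa> > 0\<close> \<open>\<rho> > 0\<close> \<open>e > 0\<close> norm_ge_zero, folded \<beta>_def,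
      OF \<open>\<beta> * (norm (x' - x))\<^sup>2 \<le> e\<close>]
  have "norm (x' - x) \<le> \<tau> / sqrt \<kappa>"
    using radius(1) divide_right_mono[OF \<open>\<rho> \<le> \<tau>\<close>, of "sqrt \<kappa>"] \<open>\<kappa> > 0\<close> by simp
  moreover have "\<beta> * norm (x' - x) \<le> P / sqrt \<kappa>"
  proof -
    have "\<kappa> * e / \<rho> \<le> P" using ke \<open>\<rho> > 0\<close> by (simp add: e_def divide_le_eq)
    then have "(\<kappa> * e / \<rho>) / sqrt \<kappa> \<le> P / sqrt \<kappa>"
      by (rule divide_right_mono) (use \<open>\<kappa> > 0\<close> in simp)
    with radius(2) show ?thesis by linarith
  qed
  moreover have "\<kappa> * norm (y' - yb) \<le> \<tau> powr \<gamma>"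
  proof -
    have "\<kappa> * norm (y' - yb) \<le> \<kappa> * e"
      using \<open>norm (y' - yb) \<le> e\<close> \<open>\<kappa> > 0\<close> by simp
    also have "\<dots> \<le> P * \<tau>"
      using ke mult_left_mono[OF \<open>\<rho> \<le> \<tau>\<close>, of P] unfolding e_def P_def by simp
    also have "\<dots> = \<tau> powr \<gamma>" unfolding P_def using \<open>\<tau> > 0\<close> by (simp add: powr_mult_base mult.commute)
    finally show ?thesis .
  qed
  ultimately show ?thesis
    using that[OF \<open>\<tau> > 0\<close> \<open>\<beta> > 0\<close> \<open>y' \<noteq> yb\<close> normal] unfolding P_def by blast
qed

lemma rescaled_penalty_bounds:
  fixes \<tau> s \<kappa> \<gamma> \<eta> \<zeta> :: real
  assumes "0 < \<tau>" "\<tau> \<le> 2 * s" "\<kappa> > 0" "\<gamma> \<ge> 1"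
    and "\<kappa> * \<eta> \<le> \<tau> powr \<gamma>" "\<zeta> \<le> \<tau> powr (\<gamma> - 1) / sqrt \<kappa>"
  shows "\<eta> / s powr \<gamma> \<le> 2 powr \<gamma> / \<kappa>" "2 * \<zeta> / s powr (\<gamma> - 1) \<le> 2 powr \<gamma> / sqrt \<kappa>"
proof -
  have "s > 0" "\<tau> / s \<le> 2" using assms(1,2) by (auto simp: divide_le_eq)
  have "\<eta> / s powr \<gamma> \<le> (\<tau> powr \<gamma> / \<kappa>) / s powr \<gamma>"
    using assms(3,5) by (intro divide_right_mono) (simp_all add: field_simps)
  also have "\<dots> = (\<tau> / s) powr \<gamma> / \<kappa>" using \<open>0 < \<tau>\<close> \<open>s > 0\<close> by (simp add: powr_divide)
  also have "\<dots> \<le> 2 powr \<gamma> / \<kappa>"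
    using \<open>\<tau> / s \<le> 2\<close> assms by (intro divide_right_mono powr_mono2) auto
  finally show "\<eta> / s powr \<gamma> \<le> 2 powr \<gamma> / \<kappa>" .
  have "2 * \<zeta> / s powr (\<gamma> - 1) \<le> 2 * (\<tau> powr (\<gamma> - 1) / sqrt \<kappa>) / s powr (\<gamma> - 1)"
    using assms(6) by (intro divide_right_mono) simp_all
  also have "\<dots> = 2 * (\<tau> / s) powr (\<gamma> - 1) / sqrt \<kappa>"
    using \<open>0 < \<tau>\<close> \<open>s > 0\<close> by (simp add: powr_divide)
  also have "\<dots> \<le> 2 * 2 powr (\<gamma> - 1) / sqrt \<kappa>"
    using \<open>\<tau> / s \<le> 2\<close> assms by (intro divide_right_mono mult_left_mono powr_mono2) auto
  also have "\<dots> = 2 powr \<gamma> / sqrt \<kappa>" by (simp add: powr_mult_base)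
  finally show "2 * \<zeta> / s powr (\<gamma> - 1) \<le> 2 powr \<gamma> / sqrt \<kappa>" .
qed

lemma pseudo_normal_of_penalized_normal:
  fixes x x' xb :: "'a::euclidean_space" and y' yb :: "'b::euclidean_space"
  defines "\<tau> \<equiv> norm (x - xb)"
  assumes normal: "- ((2 * \<beta>) *\<^sub>R (x' - x), sgn (y' - yb)) \<in> regular_normal_cone (gph Phi) (x', y')"
    and "y' \<noteq> yb" "\<tau> > 0" "\<beta> > 0" "\<kappa> \<ge> 4" "\<gamma> \<ge> 1"
    and dir: "norm (\<tau> *\<^sub>R u - (x - xb)) \<le> \<delta> * \<tau>"
    and near: "norm (x' - x) \<le> \<tau> / sqrt \<kappa>"
    and slope: "\<beta> * norm (x' - x) \<le> \<tau> powr (\<gamma> - 1) / sqrt \<kappa>"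
    and level: "\<kappa> * norm (y' - yb) \<le> \<tau> powr \<gamma>"
  obtains u' v' xs ys where
    "norm (u' - u) \<le> \<delta> + 1 / sqrt \<kappa>" "norm v' \<le> 2 powr \<gamma> / \<kappa>"
    "norm xs \<le> 2 powr \<gamma> / sqrt \<kappa>" "norm ys = 1"
    "(xs, - (1 / (\<tau> * norm u') powr (\<gamma> - 1)) *\<^sub>R ys) \<in> regular_normal_cone (gph Phi)
        (xb + \<tau> *\<^sub>R u', yb + ((\<tau> * norm u') powr \<gamma>) *\<^sub>R v')"
proof -
  define d where "d = norm (x' - x)"
  define s where "s = norm (x' - xb)"
  have "sqrt \<kappa> \<ge> 2" using real_sqrt_le_mono[OF \<open>\<kappa> \<ge> 4\<close>] by simp
  then have "\<tau> / sqrt \<kappa> \<le> \<tau> / 2" using \<open>\<tau> > 0\<close> \<open>\<kappa> \<ge> 4\<close> by (intro divide_left_mono) simp_all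
  moreover have "\<tau> \<le> s + d"
    using norm_triangle_ineq4[of "x' - xb" "x' - x"] unfolding \<tau>_def s_def d_def by simp
  ultimately have "\<tau> \<le> 2 * s" using near unfolding d_def by linarith
  then have "s > 0" using \<open>\<tau> > 0\<close> by simp
  define \<mu> where "\<mu> = 1 / s powr (\<gamma> - 1)"
  define u' where "u' = (1 / \<tau>) *\<^sub>R (x' - xb)"
  define v' where "v' = (1 / s powr \<gamma>) *\<^sub>R (y' - yb)"
  define xs where "xs = \<mu> *\<^sub>R ((2 * \<beta>) *\<^sub>R (x - x'))"
  define ys where "ys = sgn (y' - yb)"
  have "\<mu> > 0" unfolding \<mu>_def using \<open>s > 0\<close> by simp
  have "(xs, - \<mu> *\<^sub>R ys) = \<mu> *\<^sub>R (- ((2 * \<beta>) *\<^sub>R (x' - x), sgn (y' - yb)))"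
    unfolding xs_def ys_def by (simp add: algebra_simps)
  then have "(xs, - \<mu> *\<^sub>R ys) \<in> regular_normal_cone (gph Phi) (x', y')"
    using regular_normal_cone_scaleR[OF normal \<open>\<mu> > 0\<close>] by metis
  moreover have "\<tau> * norm u' = s" unfolding u'_def s_def using \<open>\<tau> > 0\<close> by simp
  moreover have "xb + \<tau> *\<^sub>R u' = x'" "yb + (s powr \<gamma>) *\<^sub>R v' = y'"
    unfolding u'_def v'_def using \<open>\<tau> > 0\<close> \<open>s > 0\<close> by simp_all
  ultimately have "(xs, - (1 / (\<tau> * norm u') powr (\<gamma> - 1)) *\<^sub>R ys) \<in> regular_normal_cone (gph Phi)
      (xb + \<tau> *\<^sub>R u', yb + ((\<tau> * norm u') powr \<gamma>) *\<^sub>R v')"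
    unfolding \<mu>_def by simp
  moreover have "norm (u' - u) \<le> \<delta> + 1 / sqrt \<kappa>"
  proof -
    have "u' - u = (1 / \<tau>) *\<^sub>R ((x - xb) - \<tau> *\<^sub>R u) + (1 / \<tau>) *\<^sub>R (x' - x)"
      unfolding u'_def using \<open>\<tau> > 0\<close> by (simp add: algebra_simps)
    then have "norm (u' - u) \<le> norm (\<tau> *\<^sub>R u - (x - xb)) / \<tau> + d / \<tau>"
      using norm_triangle_ineq[of "(1 / \<tau>) *\<^sub>R ((x - xb) - \<tau> *\<^sub>R u)" "(1 / \<tau>) *\<^sub>R (x' - x)"]
        \<open>\<tau> > 0\<close> unfolding d_def by (simp add: norm_minus_commute)
    also have "\<dots> \<le> \<delta> + 1 / sqrt \<kappa>"
      using dir near \<open>\<tau> > 0\<close> unfolding d_def by (simp add: divide_le_eq add_mono field_simps)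
    finally show ?thesis .
  qed
  moreover have "norm v' \<le> 2 powr \<gamma> / \<kappa>" "norm xs \<le> 2 powr \<gamma> / sqrt \<kappa>"
  proof -
    have "norm v' = norm (y' - yb) / s powr \<gamma>" unfolding v'_def by simp
    moreover have "norm xs = 2 * (\<beta> * d) / s powr (\<gamma> - 1)"
      unfolding xs_def \<mu>_def d_def using \<open>\<beta> > 0\<close> by (simp add: norm_minus_commute)
    ultimately show "norm v' \<le> 2 powr \<gamma> / \<kappa>" "norm xs \<le> 2 powr \<gamma> / sqrt \<kappa>"
      using rescaled_penalty_bounds[OF \<open>\<tau> > 0\<close> \<open>\<tau> \<le> 2 * s\<close> _ \<open>\<gamma> \<ge> 1\<close> level slope[folded d_def]]
        \<open>\<kappa> \<ge> 4\<close> by simp_all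
  qed
  moreover have "norm ys = 1" unfolding ys_def using \<open>y' \<noteq> yb\<close> by (simp add: norm_sgn)
  ultimately show ?thesis using that by blast
qed

lemma pseudo_normal_of_not_subregular:
  fixes Phi :: "'a::euclidean_space \<Rightarrow> 'b::euclidean_space set"
  assumes closed: "closed (gph Phi \<inter> cball (xb, yb) r)"
    and base: "(xb, yb) \<in> gph Phi" and "norm u = 1" "\<gamma> \<ge> 1"
    and not_subregular: "\<not> metrically_pseudo_subregular \<gamma> Phi xb yb u"
    and "0 < \<epsilon>" "\<epsilon> \<le> 1" "3 * \<epsilon> \<le> r" "\<delta> > 0" "\<kappa> \<ge> 4"
  obtains t u' v' xs ys where "0 < t" "t \<le> \<epsilon>"
    "norm (u' - u) \<le> \<delta> + 2 powr \<gamma> / sqrt \<kappa>" "norm v' \<le> 2 powr \<gamma> / sqrt \<kappa>"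
    "norm xs \<le> 2 powr \<gamma> / sqrt \<kappa>" "norm ys = 1"
    "(xs, - (1 / (t * norm u') powr (\<gamma> - 1)) *\<^sub>R ys) \<in> regular_normal_cone (gph Phi)
        (xb + t *\<^sub>R u', yb + ((t * norm u') powr \<gamma>) *\<^sub>R v')"
proof -
  have "\<kappa> > 0" using \<open>\<kappa> \<ge> 4\<close> by simp
  then obtain x where x: "x \<in> (\<lambda>w. xb + w) ` dir_nbhd \<epsilon> \<delta> u" "Phi x \<noteq> {}"
    and fail: "\<not> norm (x - xb) powr (\<gamma> - 1) * infdist x (inv_img Phi yb) \<le> \<kappa> * infdist yb (Phi x)"
    using not_subregular \<open>0 < \<epsilon>\<close> \<open>\<delta> > 0\<close> unfolding metrically_pseudo_subregular_def by blast
  define \<tau> where "\<tau> = norm (x - xb)"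
  have "\<tau> \<le> \<epsilon>" and dir: "norm (\<tau> *\<^sub>R u - (x - xb)) \<le> \<delta> * \<tau>"
    using x(1) \<open>norm u = 1\<close> unfolding dir_nbhd_def \<tau>_def by auto
  have "\<tau> \<le> 1" "3 * \<tau> \<le> r" using \<open>\<tau> \<le> \<epsilon>\<close> \<open>\<epsilon> \<le> 1\<close> \<open>3 * \<epsilon> \<le> r\<close> by linarith+
  moreover have "\<kappa> * infdist yb (Phi x) < \<tau> powr (\<gamma> - 1) * infdist x (inv_img Phi yb)"
    using fail unfolding \<tau>_def by simp
  ultimately obtain x' y' \<beta> where "\<tau> > 0" "\<beta> > 0" "y' \<noteq> yb"
    and normal: "- ((2 * \<beta>) *\<^sub>R (x' - x), sgn (y' - yb)) \<in> regular_normal_cone (gph Phi) (x', y')"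
    and "norm (x' - x) \<le> \<tau> / sqrt \<kappa>" "\<beta> * norm (x' - x) \<le> \<tau> powr (\<gamma> - 1) / sqrt \<kappa>"
      "\<kappa> * norm (y' - yb) \<le> \<tau> powr \<gamma>"
    using subregularity_failure_penalized_point[OF closed base \<open>\<gamma> \<ge> 1\<close> \<open>\<kappa> \<ge> 4\<close> _ _ x(2)]
    unfolding \<tau>_def by blast
  then obtain u' v' xs ys where
    "norm (u' - u) \<le> \<delta> + 1 / sqrt \<kappa>" "norm v' \<le> 2 powr \<gamma> / \<kappa>"
    "norm xs \<le> 2 powr \<gamma> / sqrt \<kappa>" "norm ys = 1"
    "(xs, - (1 / (\<tau> * norm u') powr (\<gamma> - 1)) *\<^sub>R ys) \<in> regular_normal_cone (gph Phi)
        (xb + \<tau> *\<^sub>R u', yb + ((\<tau> * norm u') powr \<gamma>) *\<^sub>R v')"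
    using pseudo_normal_of_penalized_normal[OF normal _ _ _ \<open>\<kappa> \<ge> 4\<close> \<open>\<gamma> \<ge> 1\<close> dir[unfolded \<tau>_def]]
    unfolding \<tau>_def by blast
  moreover have "1 / sqrt \<kappa> \<le> 2 powr \<gamma> / sqrt \<kappa>"
    using \<open>\<gamma> \<ge> 1\<close> \<open>\<kappa> \<ge> 4\<close> by (intro divide_right_mono ge_one_powr_ge_zero) auto
  moreover have "2 powr \<gamma> / \<kappa> \<le> 2 powr \<gamma> / sqrt \<kappa>"
  proof -
    have "sqrt \<kappa> * 1 \<le> sqrt \<kappa> * sqrt \<kappa>"
      using \<open>\<kappa> \<ge> 4\<close> by (intro mult_left_mono) (auto simp: real_le_rsqrt)
    then have "sqrt \<kappa> \<le> \<kappa>" using \<open>\<kappa> \<ge> 4\<close> by simp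
    then show ?thesis using \<open>\<kappa> \<ge> 4\<close> by (intro divide_left_mono) auto
  qed
  ultimately show ?thesis
    using that[of \<tau>] \<open>\<tau> > 0\<close> \<open>\<tau> \<le> \<epsilon>\<close> by (meson add_left_mono order_trans)
qed

lemma unit_kernel_element_of_pseudo_normals:
  fixes Phi :: "'a::euclidean_space \<Rightarrow> 'b::euclidean_space set"
  assumes "U \<longlonglongrightarrow> u" "V \<longlonglongrightarrow> v" "\<forall>k. T k > 0" "T \<longlonglongrightarrow> 0" "XS \<longlonglongrightarrow> 0"
    and unit: "\<forall>k. norm (YS k) = 1"
    and normal: "\<forall>k. (XS k, - (1 / (T k * norm (U k)) powr (\<gamma> - 1)) *\<^sub>R YS k)
      \<in> regular_normal_cone (gph Phi) (xb + T k *\<^sub>R U k, yb + ((T k * norm (U k)) powr \<gamma>) *\<^sub>R V k)"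
  obtains l where "norm l = 1" "l \<in> ker_sv (pseudo_coderivative \<gamma> Phi xb yb u v)"
proof -
  have "\<forall>k. YS k \<in> sphere 0 1" using unit by simp
  then obtain l q where "l \<in> sphere 0 1" "strict_mono q" "(YS \<circ> q) \<longlonglongrightarrow> l"
    using compact_sphere[THEN compact_imp_seq_compact, unfolded seq_compact_def] by metis
  moreover have "0 \<in> pseudo_coderivative \<gamma> Phi xb yb u v l"
    unfolding pseudo_coderivative_def mem_Collect_eq
    using assms(1,2,4,5)[THEN LIMSEQ_subseq_LIMSEQ, OF \<open>strict_mono q\<close>] assms(3) normal
      \<open>(YS \<circ> q) \<longlonglongrightarrow> l\<close>
    by (intro exI[of _ "U \<circ> q"] exI[of _ "V \<circ> q"] exI[of _ "T \<circ> q"] exI[of _ "XS \<circ> q"]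
        exI[of _ "YS \<circ> q"]) auto
  ultimately show ?thesis using that by (simp add: ker_sv_def)
qed

lemma pseudo_normal_sequences_of_not_subregular:
  fixes Phi :: "'a::euclidean_space \<Rightarrow> 'b::euclidean_space set"
  assumes closed: "closed (gph Phi \<inter> cball (xb, yb) r)" and "r > 0"
    and base: "(xb, yb) \<in> gph Phi" and "norm u = 1" "\<gamma> \<ge> 1"
    and not_subregular: "\<not> metrically_pseudo_subregular \<gamma> Phi xb yb u"
  obtains U V T XS YS where "U \<longlonglongrightarrow> u" "V \<longlonglongrightarrow> 0" "\<forall>k. T k > 0" "T \<longlonglongrightarrow> 0" "XS \<longlonglongrightarrow> 0"
    "\<forall>k. norm (YS k) = 1"
    "\<forall>k. (XS k, - (1 / (T k * norm (U k)) powr (\<gamma> - 1)) *\<^sub>R YS k)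
      \<in> regular_normal_cone (gph Phi) (xb + T k *\<^sub>R U k, yb + ((T k * norm (U k)) powr \<gamma>) *\<^sub>R V k)"
proof -
  define c where "c = min 1 (r / 3)"
  define a where "a k = inverse (real (Suc k))" for k
  define \<eta> where "\<eta> k = (1 + 2 powr \<gamma>) * a k" for k
  have "c > 0" "c \<le> 1" "3 * c \<le> r" using \<open>r > 0\<close> unfolding c_def by auto
  have "a k > 0" "a k \<le> 1" for k unfolding a_def by (auto simp: field_simps)
  have "\<exists>t u' v' xs ys. 0 < t \<and> t \<le> c * a k \<and> norm (u' - u) \<le> \<eta> k \<and> norm v' \<le> \<eta> k \<and>
      norm xs \<le> \<eta> k \<and> norm ys = 1 \<and>
      (xs, - (1 / (t * norm u') powr (\<gamma> - 1)) *\<^sub>R ys) \<in> regular_normal_cone (gph Phi)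
        (xb + t *\<^sub>R u', yb + ((t * norm u') powr \<gamma>) *\<^sub>R v')" for k
  proof -
    define \<kappa> where "\<kappa> = (real k + 2)\<^sup>2"
    have "c * a k \<le> c" using \<open>a k \<le> 1\<close> \<open>c > 0\<close> by (simp add: mult_left_le)
    then have "c * a k \<le> 1" "3 * (c * a k) \<le> r" using \<open>c \<le> 1\<close> \<open>3 * c \<le> r\<close> by linarith+
    moreover have "0 < c * a k" using \<open>c > 0\<close> \<open>a k > 0\<close> by simp
    moreover have "\<kappa> \<ge> 4" unfolding \<kappa>_def using power_mono[of 2 "real k + 2" 2] by simp
    ultimately obtain t u' v' xs ys where "0 < t" "t \<le> c * a k"
      "norm (u' - u) \<le> a k + 2 powr \<gamma> / sqrt \<kappa>" "norm v' \<le> 2 powr \<gamma> / sqrt \<kappa>"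
      "norm xs \<le> 2 powr \<gamma> / sqrt \<kappa>" "norm ys = 1"
      "(xs, - (1 / (t * norm u') powr (\<gamma> - 1)) *\<^sub>R ys) \<in> regular_normal_cone (gph Phi)
        (xb + t *\<^sub>R u', yb + ((t * norm u') powr \<gamma>) *\<^sub>R v')"
      using pseudo_normal_of_not_subregular[OF closed base \<open>norm u = 1\<close> \<open>\<gamma> \<ge> 1\<close> not_subregular]
        \<open>a k > 0\<close> by blast
    moreover have "2 powr \<gamma> / sqrt \<kappa> \<le> 2 powr \<gamma> * a k"
    proof -
      have "sqrt \<kappa> = real k + 2" unfolding \<kappa>_def by simp
      then have "2 powr \<gamma> / sqrt \<kappa> \<le> 2 powr \<gamma> / real (Suc k)" by (simp add: divide_left_mono)
      then show ?thesis unfolding a_def by (simp add: divide_inverse)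
    qed
    ultimately show ?thesis
      using \<open>a k > 0\<close> unfolding \<eta>_def distrib_right
      by (intro exI[of _ t] exI[of _ u'] exI[of _ v'] exI[of _ xs] exI[of _ ys]) auto
  qed
  then obtain T U V XS YS where data: "\<And>k. 0 < T k \<and> T k \<le> c * a k \<and> norm (U k - u) \<le> \<eta> k \<and>
      norm (V k) \<le> \<eta> k \<and> norm (XS k) \<le> \<eta> k \<and> norm (YS k) = 1 \<and>
      (XS k, - (1 / (T k * norm (U k)) powr (\<gamma> - 1)) *\<^sub>R YS k) \<in> regular_normal_cone (gph Phi)
        (xb + T k *\<^sub>R U k, yb + ((T k * norm (U k)) powr \<gamma>) *\<^sub>R V k)"
    by metis
  have "a \<longlonglongrightarrow> 0" unfolding a_def by (rule LIMSEQ_inverse_real_of_nat)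
  then have "\<eta> \<longlonglongrightarrow> 0" "(\<lambda>k. c * a k) \<longlonglongrightarrow> 0"
    unfolding \<eta>_def by (auto intro: tendsto_mult_right_zero)
  have "(\<lambda>k. U k - u) \<longlonglongrightarrow> 0" using data by (intro Lim_null_comparison[OF _ \<open>\<eta> \<longlonglongrightarrow> 0\<close>]) simp
  moreover have "V \<longlonglongrightarrow> 0" "XS \<longlonglongrightarrow> 0"
    using data by (intro Lim_null_comparison[OF _ \<open>\<eta> \<longlonglongrightarrow> 0\<close>]; simp)+
  moreover have "T \<longlonglongrightarrow> 0"
    using data by (intro Lim_null_comparison[OF _ \<open>(\<lambda>k. c * a k) \<longlonglongrightarrow> 0\<close>]) (simp add: less_imp_le)
  ultimately show ?thesis using that data LIM_zero_cancel by blast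
qed

theorem lemma2p16:
  fixes Phi :: "'a::euclidean_space \<Rightarrow> 'b::euclidean_space set"
    and xb :: 'a and yb :: 'b and u :: 'a and \<gamma> :: real
  assumes "(xb, yb) \<in> gph Phi"
    and "\<exists>r>0. closed (gph Phi \<inter> cball (xb, yb) r)"
    and "norm u = 1"
    and "\<gamma> \<ge> 1"
    and "ker_sv (pseudo_coderivative \<gamma> Phi xb yb u 0) \<subseteq> {0}"
  shows "metrically_pseudo_subregular \<gamma> Phi xb yb u"
proof (rule ccontr)
  assume "\<not> metrically_pseudo_subregular \<gamma> Phi xb yb u"
  moreover obtain r where "r > 0" "closed (gph Phi \<inter> cball (xb, yb) r)" using assms(2) by blast
  ultimately obtain U V T XS YS where "U \<longlonglongrightarrow> u" "V \<longlonglongrightarrow> 0" "\<forall>k. T k > 0" "T \<longlonglongrightarrow> 0"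
    "XS \<longlonglongrightarrow> 0" "\<forall>k. norm (YS k) = 1"
    "\<forall>k. (XS k, - (1 / (T k * norm (U k)) powr (\<gamma> - 1)) *\<^sub>R YS k)
      \<in> regular_normal_cone (gph Phi) (xb + T k *\<^sub>R U k, yb + ((T k * norm (U k)) powr \<gamma>) *\<^sub>R V k)"
    using pseudo_normal_sequences_of_not_subregular assms(1,3,4) by metis
  then obtain l where "norm l = 1" "l \<in> ker_sv (pseudo_coderivative \<gamma> Phi xb yb u 0)"
    by (rule unit_kernel_element_of_pseudo_normals)
  with assms(5) show False by auto
qed

end
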